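(* There exists a non-commutative bilinear algorithm computing the product of two $7\times 7$ matrices using $250$ multiplications. That is, $\langle 7,7,7\rangle\leq 250$.
   Context: Fix a field $\mathbb{K}$. A non-commutative bilinear algorithm for multiplying an $a\times b$ matrix $A$ by a $b\times c$ matrix $B$ using $r$ multiplications consists of $r$ products $t_k=\big(\sum_{i,j}\alpha^{(k)}_{ij}a_{ij}\big)\big(\sum_{j,l}\beta^{(k)}_{jl}b_{jl}\big)$ with scalars $\alpha^{(k)}_{ij},\beta^{(k)}_{jl}\in\mathbb{K}$, together with scalars $\gamma^{(k)}_{il}\in\mathbb{K}$ such that $(AB)_{il}=\sum_{k=1}^r\gamma^{(k)}_{il}t_k$ for all $i,l$. This identity must hold when the entries of $A$ and $B$ lie in an arbitrary, not necessarily commutative, associative $\mathbb{K}$-algebra. The quantity $\langle a,b,c\rangle$ denotes the minimal such $r$, i.e. the tensor rank of the matrix multiplication tensor of format $(a,b,c)$. *)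

theory Defs
  imports Main
begin

text \<open>A bilinear algorithm for multiplying an a x b matrix A by a b x c matrix B with r
products t_k = (sum alpha k i j * A i j) (sum beta k j l * B j l), and outputs
(AB) i l = sum_k gamma k i l * t_k.
Validity over an arbitrary (non-commutative) associative K-algebra is equivalent to
equality of coefficients of every noncommutative monomial A i' j * B j' l' in the
free algebra, which is the following tensor identity (the matrix multiplication
tensor decomposition).\<close>

definition bilinear_mm_algorithm ::
  "nat \<Rightarrow> nat \<Rightarrow> nat \<Rightarrow> nat \<Rightarrow> (nat \<Rightarrow> nat \<Rightarrow> nat \<Rightarrow> 'k::field)
   \<Rightarrow> (nat \<Rightarrow> nat \<Rightarrow> nat \<Rightarrow> 'k) \<Rightarrow> (nat \<Rightarrow> nat \<Rightarrow> nat \<Rightarrow> 'k) \<Rightarrow> bool"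
where
  "bilinear_mm_algorithm a b c r alpha beta gamma \<longleftrightarrow>
     (\<forall>i<a. \<forall>l<c. \<forall>i'<a. \<forall>j<b. \<forall>j'<b. \<forall>l'<c.
        (\<Sum>k<r. gamma k i l * alpha k i' j * beta k j' l') =
        (if i' = i \<and> j = j' \<and> l' = l then 1 else 0))"

definition mm_rank :: "'k::field itself \<Rightarrow> nat \<Rightarrow> nat \<Rightarrow> nat \<Rightarrow> nat" where
  "mm_rank _ a b c = (LEAST r. \<exists>(alpha::nat \<Rightarrow> nat \<Rightarrow> nat \<Rightarrow> 'k) beta gamma.
                         bilinear_mm_algorithm a b c r alpha beta gamma)"

end

theory Submission
  imports Defs "HOL-Library.More_List"
begin

text \<open>Cut 7 x 7 matrices into blocks of sizes 3 and 4 and apply a rank-7 algorithm for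
2 x 2 matrices to the blocks.  Each of its seven products multiplies two sums of blocks and is
carried out by an algorithm of format (3,3,4), (3,4,4) or (4,4,4), with 29, 38 and 49
products, cyclically rotated as needed: 3 * 29 + 3 * 38 + 49 = 250.  Instead of padding the
block sums, an inner algorithm of format p x q x r simply ignores all block entries beyond
p, q, r.  This is harmless: on the level of tensors the coefficient sum of the composed
algorithm factors into the outer sum times inner sums, and a term of an inner sum that must
contribute has its row position x inside both row blocks coupled by the outer product, so p
only has to be at least the smaller of these block sizes; likewise for q and r.\<close>

section \<open>Bilinear algorithms as coefficient triples\<close>

type_synonym 'k mm_coeffs =
  "(nat \<Rightarrow> nat \<Rightarrow> nat \<Rightarrow> 'k) \<times> (nat \<Rightarrow> nat \<Rightarrow> nat \<Rightarrow> 'k) \<times> (nat \<Rightarrow> nat \<Rightarrow> nat \<Rightarrow> 'k)"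

definition mm_algorithm :: "nat \<Rightarrow> nat \<Rightarrow> nat \<Rightarrow> nat \<Rightarrow> 'k::field mm_coeffs \<Rightarrow> bool" where
  "mm_algorithm a b c r = (\<lambda>(\<alpha>, \<beta>, \<gamma>). bilinear_mm_algorithm a b c r \<alpha> \<beta> \<gamma>)"

lemma mm_algorithm_iff [simp]:
  "mm_algorithm a b c r (\<alpha>, \<beta>, \<gamma>) \<longleftrightarrow> bilinear_mm_algorithm a b c r \<alpha> \<beta> \<gamma>"
  by (simp add: mm_algorithm_def)

lemma mm_rank_le:
  assumes "mm_algorithm a b c r (T :: 'k::field mm_coeffs)"
  shows "mm_rank TYPE('k) a b c \<le> r"
proof -
  obtain \<alpha> \<beta> \<gamma> where "T = (\<alpha>, \<beta>, \<gamma>)" by (cases T) auto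
  with assms show ?thesis
    unfolding mm_rank_def by (auto intro: Least_le)
qed

definition rotate_coeffs :: "'k mm_coeffs \<Rightarrow> 'k mm_coeffs" where
  "rotate_coeffs = (\<lambda>(\<alpha>, \<beta>, \<gamma>). (\<beta>, \<lambda>k j l. \<gamma> k l j, \<lambda>k i l. \<alpha> k l i))"

lemma mm_algorithm_rotate:
  assumes "mm_algorithm a b c r T"
  shows "mm_algorithm b c a r (rotate_coeffs T)"
proof -
  obtain \<alpha> \<beta> \<gamma> where T: "T = (\<alpha>, \<beta>, \<gamma>)" by (cases T) auto
  have alg: "bilinear_mm_algorithm a b c r \<alpha> \<beta> \<gamma>" using assms T by simp
  have "(\<Sum>k<r. \<alpha> k l i * \<beta> k i' j * \<gamma> k l' j') = (if i' = i \<and> j = j' \<and> l' = l then 1 else 0)"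
    if "i < b" "l < a" "i' < b" "j < c" "j' < c" "l' < a" for i l i' j j' l'
  proof -
    have "(\<Sum>k<r. \<gamma> k l' j' * \<alpha> k l i * \<beta> k i' j) = (if l = l' \<and> i = i' \<and> j' = j then 1 else 0)"
      using alg[unfolded bilinear_mm_algorithm_def, rule_format, of l' j' l i i' j] that by simp
    then show ?thesis by (auto simp: ac_simps)
  qed
  then show ?thesis
    unfolding T rotate_coeffs_def by (simp add: bilinear_mm_algorithm_def)
qed

section \<open>Block composition\<close>

text \<open>\<open>sp g = (G, x)\<close> places index \<open>g\<close> at offset \<open>x\<close> of block \<open>G\<close>, which has size \<open>sz G\<close>.\<close>

definition block_split :: "nat \<Rightarrow> nat \<Rightarrow> (nat \<Rightarrow> nat) \<Rightarrow> (nat \<Rightarrow> nat \<times> nat) \<Rightarrow> bool" where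
  "block_split a n sz sp \<longleftrightarrow>
     (\<forall>g<a. fst (sp g) < n \<and> snd (sp g) < sz (fst (sp g))) \<and> inj_on sp {..<a}"

definition split_two_blocks :: "nat \<Rightarrow> nat \<Rightarrow> nat \<times> nat" where
  "split_two_blocks s g = (if g < s then (0, g) else (1, g - s))"

lemma block_split_two_blocks:
  "block_split (s + t) 2 (\<lambda>I. if I = 0 then s else t) (split_two_blocks s)"
proof -
  have "inj_on (split_two_blocks s) {..<s + t}"
    by (rule inj_onI) (auto simp: split_two_blocks_def split: if_splits)
  then show ?thesis
    by (auto simp: block_split_def split_two_blocks_def)
qed

definition block_index :: "(nat \<Rightarrow> nat) \<Rightarrow> nat \<Rightarrow> nat" where
  "block_index rk K = (LEAST k. K < (\<Sum>k'<Suc k. rk k'))"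

definition block_offset :: "(nat \<Rightarrow> nat) \<Rightarrow> nat \<Rightarrow> nat" where
  "block_offset rk K = K - (\<Sum>k'<block_index rk K. rk k')"

lemma block_index_offset:
  assumes "m < rk k"
  shows "block_index rk ((\<Sum>k'<k. rk k') + m) = k"
    and "block_offset rk ((\<Sum>k'<k. rk k') + m) = m"
proof -
  show "block_index rk ((\<Sum>k'<k. rk k') + m) = k"
    unfolding block_index_def
  proof (rule Least_equality)
    show "(\<Sum>k'<k. rk k') + m < (\<Sum>k'<Suc k. rk k')" using assms by simp
  next
    fix k'' assume "(\<Sum>k'<k. rk k') + m < (\<Sum>k'<Suc k''. rk k')"
    moreover have "(\<Sum>k'<Suc k''. rk k') \<le> (\<Sum>k'<k. rk k')" if "k'' < k"
      using that by (intro sum_mono2) auto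
    ultimately show "k \<le> k''" using not_le by fastforce
  qed
  then show "block_offset rk ((\<Sum>k'<k. rk k') + m) = m"
    by (simp add: block_offset_def)
qed

lemma sum_lessThan_add:
  fixes s :: nat
  shows "(\<Sum>K < s + r. f K) = (\<Sum>K < s. f K) + (\<Sum>m<r. f (s + m))"
  by (induction r) (simp_all add: add.assoc)

lemma sum_lessThan_blocks:
  fixes rk :: "nat \<Rightarrow> nat"
  shows "(\<Sum>K < (\<Sum>k<n. rk k). f K) = (\<Sum>k<n. \<Sum>m<rk k. f ((\<Sum>k'<k. rk k') + m))"
  by (induction n) (simp_all add: sum_lessThan_add)

text \<open>The \<open>K\<close>-th product of the composed algorithm is product \<open>block_offset rk K\<close> of the
inner algorithm for outer product \<open>block_index rk K\<close>; block entries outside the inner format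
get coefficient 0.\<close>

definition block_coeff ::
  "(nat \<Rightarrow> nat \<Rightarrow> nat \<Rightarrow> 'k::mult_zero) \<Rightarrow> (nat \<Rightarrow> nat \<Rightarrow> nat \<Rightarrow> nat \<Rightarrow> 'k) \<Rightarrow> (nat \<Rightarrow> nat)
    \<Rightarrow> (nat \<Rightarrow> nat) \<Rightarrow> (nat \<Rightarrow> nat) \<Rightarrow> (nat \<Rightarrow> nat \<times> nat) \<Rightarrow> (nat \<Rightarrow> nat \<times> nat)
    \<Rightarrow> nat \<Rightarrow> nat \<Rightarrow> nat \<Rightarrow> 'k" where
  "block_coeff outer inner rk d d' sp sp' K g h =
     (let k = block_index rk K; (X, x) = sp g; (Y, y) = sp' h
      in outer k X Y * (if x < d k \<and> y < d' k then inner k (block_offset rk K) x y else 0))"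

lemma mm_algorithm_truncated:
  assumes alg: "mm_algorithm p q r n T"
    and fit: "x' = x \<and> y = y' \<and> z' = z \<Longrightarrow> x < p \<and> y < q \<and> z < r"
  shows "(\<Sum>m<n. (if x < p \<and> z < r then snd (snd T) m x z else 0)
            * (if x' < p \<and> y < q then fst T m x' y else 0)
            * (if y' < q \<and> z' < r then fst (snd T) m y' z' else 0))
         = (if x' = x \<and> y = y' \<and> z' = z then 1 else 0)"
proof (cases "x < p \<and> z < r \<and> x' < p \<and> y < q \<and> y' < q \<and> z' < r")
  case True
  then show ?thesis
    using alg by (cases T) (simp add: bilinear_mm_algorithm_def)
next
  case False
  then show ?thesis using fit by auto
qed

lemma sum_block_coeff:
  fixes \<gamma> :: "nat \<Rightarrow> nat \<Rightarrow> nat \<Rightarrow> 'k::comm_ring"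
  assumes "sp1 i = (I, x)" "sp1 i' = (I', x')" "sp2 j = (J, y)" "sp2 j' = (J', y')"
    "sp3 l = (L, z)" "sp3 l' = (L', z')"
  shows "(\<Sum>K<(\<Sum>k<r0. rk k). block_coeff \<gamma> gi rk d1 d3 sp1 sp3 K i l
            * block_coeff \<alpha> ai rk d1 d2 sp1 sp2 K i' j * block_coeff \<beta> bi rk d2 d3 sp2 sp3 K j' l')
    = (\<Sum>k<r0. \<gamma> k I L * \<alpha> k I' J * \<beta> k J' L' *
         (\<Sum>m<rk k. (if x < d1 k \<and> z < d3 k then gi k m x z else 0)
            * (if x' < d1 k \<and> y < d2 k then ai k m x' y else 0)
            * (if y' < d2 k \<and> z' < d3 k then bi k m y' z' else 0)))"
  unfolding sum_lessThan_blocks sum_distrib_left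
  by (intro sum.cong refl) (simp add: block_coeff_def block_index_offset assms, simp add: ac_simps)

lemma block_split_obtain:
  assumes "block_split a n sz sp" "g < a"
  obtains G x where "sp g = (G, x)" "G < n" "x < sz G"
  using assms unfolding block_split_def by (metis prod.collapse)

lemma block_split_eq_iff:
  assumes "block_split a n sz sp" "g < a" "g' < a" "sp g = (G, x)" "sp g' = (G', x')"
  shows "g' = g \<longleftrightarrow> G' = G \<and> x' = x"
  using assms inj_on_eq_iff[of sp "{..<a}" g' g] unfolding block_split_def by auto

lemma mm_algorithm_compose_blocks:
  fixes inner :: "nat \<Rightarrow> 'k::field mm_coeffs"
  assumes outer: "mm_algorithm n1 n2 n3 r0 (\<alpha>, \<beta>, \<gamma>)"
    and inner: "\<forall>k<r0. mm_algorithm (d1 k) (d2 k) (d3 k) (rk k) (inner k)"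
    and split1: "block_split a n1 sz1 sp1"
    and split2: "block_split b n2 sz2 sp2"
    and split3: "block_split c n3 sz3 sp3"
    and fit1: "\<forall>k<r0. \<forall>I<n1. \<forall>I'<n1. \<forall>J<n2. \<forall>L<n3.
      \<alpha> k I' J \<noteq> 0 \<longrightarrow> \<gamma> k I L \<noteq> 0 \<longrightarrow> min (sz1 I) (sz1 I') \<le> d1 k"
    and fit2: "\<forall>k<r0. \<forall>J<n2. \<forall>J'<n2. \<forall>I<n1. \<forall>L<n3.
      \<alpha> k I J \<noteq> 0 \<longrightarrow> \<beta> k J' L \<noteq> 0 \<longrightarrow> min (sz2 J) (sz2 J') \<le> d2 k"
    and fit3: "\<forall>k<r0. \<forall>L<n3. \<forall>L'<n3. \<forall>I<n1. \<forall>J<n2.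
      \<beta> k J L' \<noteq> 0 \<longrightarrow> \<gamma> k I L \<noteq> 0 \<longrightarrow> min (sz3 L) (sz3 L') \<le> d3 k"
  shows "mm_algorithm a b c (\<Sum>k<r0. rk k)
    (block_coeff \<alpha> (\<lambda>k. fst (inner k)) rk d1 d2 sp1 sp2,
     block_coeff \<beta> (\<lambda>k. fst (snd (inner k))) rk d2 d3 sp2 sp3,
     block_coeff \<gamma> (\<lambda>k. snd (snd (inner k))) rk d1 d3 sp1 sp3)"
    (is "mm_algorithm _ _ _ _ (?A, ?B, ?C)")
  unfolding mm_algorithm_iff bilinear_mm_algorithm_def
proof (intro allI impI)
  fix i l i' j j' l'
  assume idx: "i < a" "l < c" "i' < a" "j < b" "j' < b" "l' < c"
  obtain I x where I: "sp1 i = (I, x)" "I < n1" "x < sz1 I" using split1 idx(1) by (rule block_split_obtain)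
  obtain I' x' where I': "sp1 i' = (I', x')" "I' < n1" "x' < sz1 I'" using split1 idx(3) by (rule block_split_obtain)
  obtain J y where J: "sp2 j = (J, y)" "J < n2" "y < sz2 J" using split2 idx(4) by (rule block_split_obtain)
  obtain J' y' where J': "sp2 j' = (J', y')" "J' < n2" "y' < sz2 J'" using split2 idx(5) by (rule block_split_obtain)
  obtain L z where L: "sp3 l = (L, z)" "L < n3" "z < sz3 L" using split3 idx(2) by (rule block_split_obtain)
  obtain L' z' where L': "sp3 l' = (L', z')" "L' < n3" "z' < sz3 L'" using split3 idx(6) by (rule block_split_obtain)
  define \<delta> where "\<delta> = (if x' = x \<and> y = y' \<and> z' = z then 1 else (0::'k))"
  define w where "w k = \<gamma> k I L * \<alpha> k I' J * \<beta> k J' L'" for k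
  let ?trunc = "\<lambda>k. \<Sum>m<rk k. (if x < d1 k \<and> z < d3 k then snd (snd (inner k)) m x z else 0)
      * (if x' < d1 k \<and> y < d2 k then fst (inner k) m x' y else 0)
      * (if y' < d2 k \<and> z' < d3 k then fst (snd (inner k)) m y' z' else 0)"
  have "w k * ?trunc k = w k * \<delta>" if "k < r0" for k
  proof (cases "w k = 0")
    case False
    then have nz: "\<gamma> k I L \<noteq> 0" "\<alpha> k I' J \<noteq> 0" "\<beta> k J' L' \<noteq> 0" by (auto simp: w_def)
    have "x' = x \<and> y = y' \<and> z' = z \<Longrightarrow> x < d1 k \<and> y < d2 k \<and> z < d3 k"
      using fit1[rule_format, OF that I(2) I'(2) J(2) L(2) nz(2,1)]
        fit2[rule_format, OF that J(2) J'(2) I'(2) L'(2) nz(2,3)]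
        fit3[rule_format, OF that L(2) L'(2) I(2) J'(2) nz(3,1)] I(3) I'(3) J(3) J'(3) L(3) L'(3)
      by auto
    then have "?trunc k = \<delta>"
      unfolding \<delta>_def using inner that by (intro mm_algorithm_truncated) auto
    then show ?thesis by simp
  qed simp
  then have "(\<Sum>k<r0. w k * ?trunc k) = \<delta> * (\<Sum>k<r0. w k)"
    by (simp add: sum_distrib_left mult.commute)
  also have "(\<Sum>k<r0. w k) = (if I' = I \<and> J = J' \<and> L' = L then 1 else 0)"
    using outer I J L I' J' L' unfolding w_def by (simp add: bilinear_mm_algorithm_def)
  also have "\<delta> * (if I' = I \<and> J = J' \<and> L' = L then 1 else 0) = (if i' = i \<and> j = j' \<and> l' = l then 1 else 0)"
    using block_split_eq_iff[OF split1 idx(1,3) I(1) I'(1)] block_split_eq_iff[OF split2 idx(4,5) J(1) J'(1)]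
      block_split_eq_iff[OF split3 idx(2,6) L(1) L'(1)]
    by (auto simp: \<delta>_def)
  finally show "(\<Sum>K<(\<Sum>k<r0. rk k). ?C K i l * ?A K i' j * ?B K j' l') = (if i' = i \<and> j = j' \<and> l' = l then 1 else 0)"
    unfolding sum_block_coeff[OF I(1) I'(1) J(1) J'(1) L(1) L'(1)] w_def .
qed

section \<open>Integer decompositions checked by evaluation\<close>

text \<open>A product is encoded by the triple of integer coefficient vectors of \<open>A\<close>, \<open>B\<close> and
\<open>C\<close>, each listing its matrix in row-major order.\<close>

definition decode_A :: "nat \<Rightarrow> (int list \<times> int list \<times> int list) list \<Rightarrow> nat \<Rightarrow> nat \<Rightarrow> nat \<Rightarrow> 'k::ring_1" where
  "decode_A b S k i j = of_int (nth_default 0 (fst (S ! k)) (i * b + j))"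

definition decode_B :: "nat \<Rightarrow> (int list \<times> int list \<times> int list) list \<Rightarrow> nat \<Rightarrow> nat \<Rightarrow> nat \<Rightarrow> 'k::ring_1" where
  "decode_B c S k j l = of_int (nth_default 0 (fst (snd (S ! k))) (j * c + l))"

definition decode_C :: "nat \<Rightarrow> (int list \<times> int list \<times> int list) list \<Rightarrow> nat \<Rightarrow> nat \<Rightarrow> nat \<Rightarrow> 'k::ring_1" where
  "decode_C c S k i l = of_int (nth_default 0 (snd (snd (S ! k))) (i * c + l))"

abbreviation decode :: "nat \<Rightarrow> nat \<Rightarrow> (int list \<times> int list \<times> int list) list \<Rightarrow> 'k::field mm_coeffs" where
  "decode b c S \<equiv> (decode_A b S, decode_B c S, decode_C c S)"

definition add_scaled_beta :: "nat \<Rightarrow> nat \<Rightarrow> int list \<times> int list \<times> int list \<Rightarrow> int list \<Rightarrow> int list" where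
  "add_scaled_beta u v = (\<lambda>(\<alpha>, \<beta>, \<gamma>) acc.
     let w = nth_default 0 \<gamma> u * nth_default 0 \<alpha> v in if w = 0 then acc else map2 (\<lambda>s t. s + w * t) acc \<beta>)"

definition beta_combination :: "(int list \<times> int list \<times> int list) list \<Rightarrow> nat \<Rightarrow> nat \<Rightarrow> nat \<Rightarrow> int list" where
  "beta_combination S u v N = fold (add_scaled_beta u v) S (replicate N 0)"

lemma fold_add_scaled_beta:
  assumes "\<forall>(\<alpha>, \<beta>, \<gamma>) \<in> set S. length \<beta> = N" "length acc = N" "t < N"
  shows "length (fold (add_scaled_beta u v) S acc) = N \<and>
    fold (add_scaled_beta u v) S acc ! t =
      acc ! t + (\<Sum>(\<alpha>, \<beta>, \<gamma>) \<leftarrow> S. nth_default 0 \<gamma> u * nth_default 0 \<alpha> v * nth_default 0 \<beta> t)"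
  using assms
proof (induction S arbitrary: acc)
  case (Cons T S)
  obtain \<alpha> \<beta> \<gamma> where T: "T = (\<alpha>, \<beta>, \<gamma>)" by (metis prod.exhaust)
  with Cons.prems have "length \<beta> = N" by auto
  with Cons.prems have "length (add_scaled_beta u v T acc) = N"
    "add_scaled_beta u v T acc ! t = acc ! t + nth_default 0 \<gamma> u * nth_default 0 \<alpha> v * nth_default 0 \<beta> t"
    by (auto simp: add_scaled_beta_def T Let_def nth_default_def)
  with Cons.IH[of "add_scaled_beta u v T acc"] Cons.prems show ?case by (simp add: T)
qed simp

lemma mixed_radix_less:
  fixes j l b c :: nat
  assumes "j < b" "l < c"
  shows "j * c + l < b * c"
proof -
  have "j * c + l < Suc j * c" using assms(2) by simp
  also have "\<dots> \<le> b * c" using assms(1) by (intro mult_right_mono) auto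
  finally show ?thesis .
qed

lemma mixed_radix_eq_iff:
  fixes j l j' l' c :: nat
  assumes "l < c" "l' < c"
  shows "j' * c + l' = j * c + l \<longleftrightarrow> j' = j \<and> l' = l"
proof
  assume "j' * c + l' = j * c + l"
  then have "(j' * c + l') div c = (j * c + l) div c" "(j' * c + l') mod c = (j * c + l) mod c"
    by simp_all
  with assms show "j' = j \<and> l' = l" by simp
qed simp

text \<open>A separate function, so that \<open>code_simp\<close> unfolds it only at concrete indices instead
of evaluating the fold symbolically under a binder.\<close>

fun slice_correct :: "nat \<Rightarrow> nat \<Rightarrow> (int list \<times> int list \<times> int list) list \<Rightarrow> (nat \<times> nat) \<times> nat \<times> nat \<Rightarrow> bool" where
  "slice_correct b c S ((i, l), (i', j)) \<longleftrightarrow>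
     beta_combination S (i * c + l) (i' * b + j) (b * c) = map (\<lambda>t. if i' = i \<and> t = j * c + l then 1 else 0) [0..<b * c]"

definition valid_encoding :: "nat \<Rightarrow> nat \<Rightarrow> nat \<Rightarrow> (int list \<times> int list \<times> int list) list \<Rightarrow> bool" where
  "valid_encoding a b c S \<longleftrightarrow>
     (\<forall>(\<alpha>, \<beta>, \<gamma>) \<in> set S. length \<beta> = b * c) \<and>
     list_all (slice_correct b c S) (List.product (List.product [0..<a] [0..<c]) (List.product [0..<a] [0..<b]))"

lemma mm_algorithm_decode:
  assumes "valid_encoding a b c S" "length S = r"
  shows "mm_algorithm a b c r (decode b c S :: 'k::field mm_coeffs)"
  unfolding mm_algorithm_iff bilinear_mm_algorithm_def
proof (intro allI impI)
  fix i l i' j j' l'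
  assume idx: "i < a" "l < c" "i' < a" "j < b" "j' < b" "l' < c"
  let ?u = "i * c + l" and ?v = "i' * b + j" and ?t = "j' * c + l'"
  have lengths: "\<forall>(\<alpha>, \<beta>, \<gamma>) \<in> set S. length \<beta> = b * c"
    and slice: "beta_combination S ?u ?v (b * c) = map (\<lambda>t. if i' = i \<and> t = j * c + l then 1 else 0) [0..<b * c]"
    using assms idx by (auto simp: valid_encoding_def list_all_iff)
  have t: "?t < b * c" using idx(5,6) by (rule mixed_radix_less)
  have "(\<Sum>k<r. decode_C c S k i l * decode_A b S k i' j * decode_B c S k j' l' :: 'k)
      = of_int (\<Sum>(\<alpha>, \<beta>, \<gamma>) \<leftarrow> S. nth_default 0 \<gamma> ?u * nth_default 0 \<alpha> ?v * nth_default 0 \<beta> ?t)"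
    by (simp add: assms(2)[symmetric] decode_A_def decode_B_def decode_C_def sum_list_sum_nth
        atLeast0LessThan case_prod_beta)
  also have "\<dots> = of_int (beta_combination S ?u ?v (b * c) ! ?t)"
    using fold_add_scaled_beta[OF lengths _ t] t by (simp add: beta_combination_def)
  also have "\<dots> = (if i' = i \<and> j = j' \<and> l' = l then 1 else 0)"
    using t by (auto simp: slice mixed_radix_eq_iff[OF idx(2,6)])
  finally show "(\<Sum>k<r. decode_C c S k i l * decode_A b S k i' j * decode_B c S k j' l' :: 'k)
      = (if i' = i \<and> j = j' \<and> l' = l then 1 else 0)" .
qed

definition alg_222 :: "(int list \<times> int list \<times> int list) list" where
  "alg_222 = [
    ([0,1,0,0], [0,0,- 1,1], [0,1,0,0]),
    ([1,0,1,0], [- 1,0,1,0], [0,0,- 1,0]),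
    ([0,0,0,1], [0,1,0,- 1], [0,0,0,- 1]),
    ([0,0,1,1], [0,1,0,0], [- 1,- 1,1,1]),
    ([1,1,1,1], [0,0,1,0], [1,1,0,0]),
    ([1,0,1,1], [0,1,- 1,0], [1,1,- 1,0]),
    ([1,0,0,0], [1,- 1,0,0], [1,0,- 1,0])
  ]"

definition alg_334 :: "(int list \<times> int list \<times> int list) list" where
  "alg_334 = [
    ([0,0,0,1,0,- 1,- 2,0,1], [0,1,0,0,0,1,0,0,0,1,0,1], [0,- 1,1,0,- 1,- 1,0,- 1,0,- 1,1,0]),
    ([0,0,0,2,- 1,- 1,0,0,0], [0,0,0,0,0,1,0,0,0,0,0,0], [0,1,- 1,0,1,- 1,1,0,0,0,0,0]),
    ([- 1,0,1,0,0,0,2,0,- 2], [0,- 1,- 1,0,1,0,0,0,- 1,- 2,- 2,1], [0,0,1,0,0,0,0,0,0,0,1,0]),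
    ([0,0,0,0,- 1,0,0,1,0], [- 1,0,0,1,- 1,0,0,1,- 1,0,0,1], [0,0,0,1,0,0,0,0,0,0,0,1]),
    ([0,0,0,0,1,0,1,- 1,0], [- 1,0,0,1,- 1,0,0,0,- 1,0,0,1], [0,0,0,1,- 1,0,0,0,0,0,0,1]),
    ([0,0,0,0,0,0,- 2,0,1], [0,0,0,0,0,0,0,0,0,0,0,1], [2,2,0,2,1,1,0,1,1,1,0,1]),
    ([0,1,0,0,1,0,0,- 1,0], [0,- 1,- 1,1,0,- 1,- 1,1,0,- 1,- 1,1], [0,0,0,1,0,0,0,0,0,0,0,0]),
    ([- 1,1,0,- 1,1,0,1,- 1,0], [0,- 1,- 1,1,0,- 1,0,0,0,- 1,- 2,1], [0,0,0,0,0,0,1,0,0,0,0,0]),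
    ([1,- 1,0,0,0,0,- 1,1,0], [0,0,0,0,0,1,1,0,0,0,0,0], [1,0,- 1,0,0,0,1,0,0,0,0,0]),
    ([- 1,1,1,- 2,1,1,1,- 1,- 1], [- 1,1,2,0,- 1,1,2,0,- 1,1,2,0], [0,- 1,1,0,0,0,0,0,0,0,0,0]),
    ([1,- 1,0,0,- 1,0,- 1,1,0], [0,- 1,- 1,1,0,- 1,- 1,0,0,- 1,- 1,1], [0,0,0,1,0,0,1,0,0,0,0,0]),
    ([0,0,0,1,0,0,0,0,0], [0,- 1,0,1,0,- 1,0,0,0,- 1,0,1], [0,0,0,0,1,0,1,1,0,0,0,0]),
    ([0,0,0,2,0,- 1,- 2,0,1], [0,1,0,0,0,1,0,0,0,1,0,0], [0,0,0,0,1,1,0,1,0,0,0,0]),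
    ([0,0,0,0,0,0,2,- 1,- 1], [0,0,0,0,0,0,0,0,- 1,0,0,1], [2,- 1,1,0,0,0,0,0,1,- 1,1,0]),
    ([- 1,1,0,- 2,1,1,1,- 1,0], [0,0,0,0,0,1,0,0,0,0,1,0], [0,1,- 1,0,0,0,1,0,0,0,0,0]),
    ([0,0,0,1,0,- 1,- 1,0,1], [0,- 1,0,0,0,- 1,0,0,- 1,- 2,0,1], [0,- 1,1,0,0,0,0,0,0,- 1,1,0]),
    ([0,0,0,0,0,0,1,- 1,0], [0,0,0,0,1,0,0,0,- 1,0,0,1], [- 1,0,1,0,- 1,0,0,0,- 1,0,1,0]),
    ([0,0,0,0,0,0,1,0,0], [1,0,0,0,1,0,0,0,1,0,0,1], [1,0,0,1,0,0,0,0,1,0,0,1]),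
    ([- 2,1,1,0,0,0,4,- 2,- 2], [0,0,0,0,1,1,1,0,0,0,0,0], [1,0,0,0,0,0,0,0,0,0,0,0]),
    ([2,0,- 1,0,0,0,- 4,0,2], [0,1,1,0,0,1,1,0,0,1,1,0], [1,1,0,1,0,0,0,0,0,0,0,0]),
    ([1,0,- 1,0,0,0,- 1,0,1], [0,0,0,0,0,0,0,0,0,- 1,- 1,1], [0,1,1,0,0,0,0,0,0,0,1,0]),
    ([0,0,0,- 1,0,1,0,0,0], [0,0,0,0,0,1,0,0,0,- 1,0,1], [0,- 1,1,0,0,- 1,0,0,0,- 1,1,0]),
    ([0,0,0,- 1,0,1,- 1,1,0], [0,0,0,0,0,- 1,0,0,- 1,0,0,1], [0,- 1,1,0,- 1,0,0,0,0,- 1,1,0]),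
    ([2,- 1,- 1,2,- 1,- 1,- 2,1,1], [- 1,1,2,0,- 1,1,2,0,- 1,1,1,0], [0,- 1,1,0,0,0,0,0,0,0,0,0]),
    ([0,0,0,- 1,1,0,1,- 1,0], [- 1,0,0,1,0,1,0,0,- 1,0,0,1], [0,0,0,0,1,0,0,0,0,0,0,0]),
    ([- 1,0,0,0,0,0,1,0,0], [- 1,1,1,0,- 1,1,1,0,- 1,1,1,0], [1,- 1,1,0,0,0,0,0,0,0,0,0]),
    ([1,0,- 1,0,0,0,- 3,1,2], [0,0,0,0,1,1,1,0,- 1,0,0,1], [1,0,1,0,0,0,0,0,0,0,1,0]),
    ([0,0,0,0,1,0,0,0,0], [0,0,0,0,0,0,0,1,0,0,0,0], [0,0,0,0,0,0,0,1,0,0,0,1]),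
    ([- 1,0,1,0,0,0,3,0,- 2], [0,1,1,0,0,1,1,0,0,1,1,1], [1,1,1,1,0,0,0,0,0,0,1,0])
  ]"

definition alg_344 :: "(int list \<times> int list \<times> int list) list" where
  "alg_344 = [
    ([0,0,0,0,- 1,1,0,1,0,0,0,0], [0,0,0,0,0,1,1,1,0,1,1,1,0,0,0,0], [0,0,0,- 1,1,1,- 1,1,1,0,- 1,1]),
    ([1,- 1,1,- 1,0,- 1,1,0,0,1,- 1,0], [0,0,- 1,- 1,0,0,0,0,0,- 1,- 1,- 1,0,- 1,- 1,- 1], [1,1,- 1,0,0,0,0,0,0,1,0,0]),
    ([0,0,0,0,0,- 1,1,0,0,0,0,0], [0,0,0,0,0,1,0,0,0,0,0,0,0,- 1,0,0], [0,1,0,- 1,0,- 1,0,1,0,- 1,0,1]),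
    ([0,0,0,0,0,- 1,0,0,0,1,0,0], [0,0,0,0,1,0,1,1,1,0,1,1,1,0,1,1], [0,0,0,0,0,0,0,0,1,0,- 1,1]),
    ([0,0,0,0,- 1,- 1,1,0,1,1,- 1,0], [0,- 1,- 1,- 1,0,0,0,0,0,0,0,0,0,- 1,- 1,- 1], [0,0,0,- 1,- 1,0,0,1,- 1,0,1,- 1]),
    ([1,- 1,1,- 1,0,- 1,1,0,1,1,- 1,0], [1,0,1,0,0,0,0,0,0,0,0,0,0,0,0,0], [0,0,0,0,1,0,0,- 1,1,0,0,- 1]),
    ([0,0,1,0,0,- 1,1,0,0,1,- 1,0], [1,0,1,1,0,0,0,0,1,1,1,1,1,1,1,1], [1,1,- 1,0,0,0,0,0,0,0,0,0]),
    ([- 1,0,1,0,- 2,0,1,1,1,1,- 1,0], [1,0,1,1,0,0,0,0,0,0,0,0,0,0,0,0], [0,0,0,- 1,0,0,0,0,0,0,0,0]),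
    ([1,- 1,1,- 1,0,- 1,1,0,- 1,2,- 1,1], [0,1,0,0,0,0,0,0,0,0,0,0,0,0,0,0], [0,0,0,0,0,0,0,0,0,- 1,0,0]),
    ([- 1,0,0,1,0,0,0,0,0,0,0,0], [1,0,1,1,0,0,0,0,0,1,1,1,0,1,1,1], [- 1,0,1,0,0,0,0,0,0,0,0,0]),
    ([0,0,0,0,0,- 1,1,0,0,1,- 1,0], [0,1,1,1,0,0,0,0,0,0,1,1,0,1,1,1], [1,1,- 1,0,0,0,0,0,1,1,- 2,1]),
    ([- 1,1,- 1,1,0,0,0,0,0,0,0,0], [0,1,1,1,0,0,0,0,0,1,1,1,0,1,1,1], [0,- 1,1,- 1,- 1,0,0,1,- 1,- 1,0,1]),
    ([0,- 1,1,- 1,0,0,0,0,0,0,0,0], [0,1,1,1,0,0,0,0,1,0,1,1,0,1,1,1], [1,0,0,0,0,0,0,0,1,0,- 1,1]),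
    ([0,0,0,0,0,1,- 1,1,0,0,0,0], [1,1,2,1,1,0,1,0,1,0,1,0,1,1,2,1], [0,0,0,0,1,0,0,0,1,0,- 1,1]),
    ([0,0,0,0,0,1,- 1,0,0,0,0,1], [0,- 1,0,0,0,0,0,0,0,0,0,0,1,- 1,1,0], [0,0,0,0,0,0,0,0,0,0,1,- 1]),
    ([0,- 1,1,- 1,0,- 1,1,0,0,1,- 1,0], [1,1,1,1,0,0,0,0,1,0,1,1,1,1,1,1], [- 1,- 1,1,0,0,0,0,0,- 1,0,1,- 1]),
    ([0,1,- 1,1,1,1,- 1,0,- 1,- 1,1,0], [- 1,1,0,0,0,0,0,0,0,0,0,0,0,1,1,1], [0,0,0,1,0,0,0,0,1,0,- 1,1]),
    ([0,1,- 1,1,0,0,- 1,1,0,0,1,- 1], [0,- 1,0,0,0,0,0,0,0,0,0,0,- 1,- 1,- 1,- 1], [0,0,0,0,0,0,0,0,1,0,- 1,1]),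
    ([1,- 1,1,- 1,0,- 1,1,0,0,0,0,0], [1,1,2,1,0,0,0,0,0,1,1,1,0,1,1,1], [0,0,1,- 1,- 1,0,0,1,- 1,0,0,1]),
    ([0,0,0,0,0,- 1,2,- 1,0,0,0,0], [0,0,0,0,1,0,1,0,1,0,1,0,0,0,0,0], [0,0,- 1,1,1,1,0,- 1,1,1,0,- 1]),
    ([0,0,0,0,0,- 1,1,0,0,1,- 1,0], [- 1,1,0,1,0,0,0,0,- 1,0,0,1,0,1,1,1], [0,0,0,0,0,0,0,0,0,0,1,- 1]),
    ([0,0,0,0,- 1,0,0,1,0,1,0,0], [0,1,0,0,0,1,1,1,0,1,1,1,0,0,0,0], [0,0,0,0,- 1,- 1,1,0,- 1,0,1,0]),
    ([0,1,0,0,- 1,1,0,1,0,0,0,0], [1,0,1,1,0,1,1,1,0,1,1,1,0,0,0,0], [0,0,0,1,- 1,0,1,- 1,- 1,0,1,- 1]),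
    ([0,1,0,0,0,0,1,- 1,0,0,0,0], [0,1,1,0,1,0,1,0,1,0,1,0,0,1,1,0], [0,0,1,- 1,1,0,- 1,1,1,0,- 1,1]),
    ([0,1,0,0,0,1,- 1,0,0,0,0,0], [1,0,1,1,0,- 1,0,0,1,0,1,1,1,1,1,1], [0,- 1,0,1,- 1,0,1,- 1,- 1,0,1,- 1]),
    ([0,0,0,0,1,0,0,- 1,- 1,0,0,1], [0,1,0,0,0,0,0,0,0,0,0,0,0,1,1,1], [0,0,0,0,0,0,0,0,- 1,0,1,0]),
    ([0,1,0,0,0,0,0,0,0,0,0,0], [1,0,1,1,- 1,0,0,0,0,1,1,1,1,1,1,1], [- 1,0,1,- 1,1,0,- 1,1,1,0,- 1,1]),
    ([0,0,0,0,1,0,0,- 1,- 1,- 1,1,0], [1,1,2,1,0,0,0,0,0,0,0,0,0,1,1,1], [0,0,0,0,1,0,0,- 1,1,0,- 1,0]),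
    ([0,0,0,0,0,0,1,- 1,0,- 1,0,0], [0,1,0,0,1,0,1,0,1,0,1,0,0,1,0,0], [0,0,0,0,- 1,- 1,1,0,- 1,- 1,0,1]),
    ([0,0,0,0,0,- 1,1,0,0,0,0,0], [1,1,2,1,- 1,0,- 1,0,0,1,1,1,1,1,2,1], [0,0,- 1,1,0,0,1,- 1,0,0,1,- 1]),
    ([0,0,0,0,0,1,0,0,0,- 1,0,0], [0,1,0,0,0,0,- 1,- 1,0,0,- 1,- 1,0,1,0,0], [0,0,0,0,1,1,- 1,0,0,0,0,0]),
    ([0,0,0,0,1,0,0,- 1,0,0,0,0], [1,1,2,1,0,1,1,1,0,1,1,1,0,0,0,0], [0,0,0,0,- 1,0,1,0,- 1,0,1,0]),
    ([0,0,0,0,0,1,0,- 1,0,- 1,0,1], [0,1,0,0,0,0,0,0,0,0,0,0,0,1,0,0], [0,0,0,0,0,0,0,0,0,1,1,- 2]),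
    ([0,- 1,0,1,0,- 1,0,1,0,0,0,0], [1,0,1,1,0,0,0,0,0,0,0,1,0,0,0,1], [0,0,- 1,1,0,0,0,0,0,0,0,0]),
    ([0,0,0,0,0,1,- 1,0,0,- 1,0,0], [0,1,0,0,- 1,1,- 1,0,- 1,1,- 1,0,0,0,0,0], [0,0,0,0,- 1,- 1,1,0,- 1,- 1,1,0]),
    ([0,0,1,- 1,0,0,1,- 1,0,0,0,0], [1,1,2,1,0,0,0,0,0,0,0,1,0,1,1,1], [0,0,- 1,1,0,0,0,0,0,0,0,0]),
    ([0,1,0,0,0,1,0,0,0,0,0,0], [1,- 1,0,1,0,0,0,1,0,0,0,1,0,- 1,- 1,0], [0,0,0,0,1,0,- 1,1,1,0,- 1,1]),
    ([0,0,0,1,0,- 1,1,0,0,0,0,0], [1,0,1,1,0,0,0,0,1,0,1,1,1,0,1,1], [0,- 1,1,0,0,0,0,0,0,0,0,0])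
  ]"

definition alg_444 :: "(int list \<times> int list \<times> int list) list" where
  "alg_444 = [
    ([1,0,0,0,- 1,0,0,0,- 1,0,0,0,1,0,0,0], [1,0,0,0,- 1,0,0,0,- 1,0,0,0,1,0,0,0], [0,0,0,0,0,0,0,0,0,0,0,0,1,1,1,1]),
    ([0,- 1,0,0,0,0,0,0,0,1,0,0,0,0,0,0], [0,0,0,0,0,1,0,0,0,0,0,0,0,- 1,0,0], [0,0,0,0,0,0,0,0,0,1,0,1,0,0,0,0]),
    ([- 1,0,0,0,0,0,0,0,1,0,0,0,0,0,0,0], [0,1,0,0,0,0,0,0,0,- 1,0,0,0,0,0,0], [0,0,0,0,0,0,0,0,1,1,1,1,1,1,1,1]),
    ([- 1,0,0,0,1,1,0,0,1,0,0,0,- 1,- 1,0,0], [- 1,1,0,0,1,0,0,0,1,- 1,0,0,- 1,0,0,0], [0,0,0,0,0,0,0,0,- 1,0,- 1,0,- 1,- 1,- 1,- 1]),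
    ([0,0,0,0,0,- 1,0,0,0,0,0,0,0,1,0,0], [- 1,1,0,0,1,- 1,0,0,1,- 1,0,0,- 1,1,0,0], [0,0,0,0,0,0,0,0,0,0,0,0,0,- 1,0,- 1]),
    ([- 1,- 1,0,0,1,1,0,0,1,1,0,0,- 1,- 1,0,0], [0,0,0,0,1,0,0,0,0,0,0,0,- 1,0,0,0], [0,0,0,0,0,0,0,0,1,0,1,0,0,0,0,0]),
    ([0,0,0,0,1,1,0,0,0,0,0,0,- 1,- 1,0,0], [1,- 1,0,0,0,0,0,0,- 1,1,0,0,0,0,0,0], [0,0,0,0,0,0,0,0,- 1,0,- 1,0,- 1,0,- 1,0]),
    ([0,0,- 1,0,0,0,1,0,0,0,0,0,0,0,0,0], [0,0,0,0,0,0,0,0,0,0,1,0,0,0,- 1,0], [0,0,0,0,0,0,1,1,0,0,0,0,0,0,0,0]),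
    ([0,0,0,1,0,0,0,0,0,0,0,0,0,0,0,0], [0,0,0,0,0,0,0,0,0,0,0,0,0,0,0,1], [0,0,0,1,0,0,0,0,0,0,0,0,0,0,0,0]),
    ([0,0,1,0,0,0,0,0,0,0,0,0,0,0,0,0], [0,0,0,0,0,0,0,0,0,0,0,1,0,0,0,0], [0,0,1,1,0,0,1,1,0,0,0,0,0,0,0,0]),
    ([0,0,1,0,0,0,- 1,- 1,0,0,0,0,0,0,0,0], [0,0,0,0,0,0,0,0,0,0,- 1,1,0,0,1,0], [0,0,- 1,0,0,0,- 1,- 1,0,0,0,0,0,0,0,0]),
    ([0,0,0,0,0,0,0,1,0,0,0,0,0,0,0,0], [0,0,0,0,0,0,0,0,0,0,- 1,1,0,0,1,- 1], [0,0,0,0,0,0,0,- 1,0,0,0,0,0,0,0,0]),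
    ([0,0,1,1,0,0,- 1,- 1,0,0,0,0,0,0,0,0], [0,0,0,0,0,0,0,0,0,0,0,0,0,0,1,0], [0,0,1,0,0,0,0,0,0,0,0,0,0,0,0,0]),
    ([0,0,0,0,0,0,- 1,- 1,0,0,0,0,0,0,0,0], [0,0,0,0,0,0,0,0,0,0,1,- 1,0,0,0,0], [0,0,- 1,0,0,0,- 1,0,0,0,0,0,0,0,0,0]),
    ([- 1,0,0,0,1,0,0,0,0,0,0,0,0,0,0,0], [0,0,1,0,0,0,- 1,0,0,0,0,0,0,0,0,0], [0,0,0,0,1,1,1,1,0,0,0,0,1,1,1,1]),
    ([0,1,0,0,0,0,0,0,0,0,0,0,0,0,0,0], [0,0,0,0,0,0,0,1,0,0,0,0,0,0,0,0], [0,1,0,1,0,0,0,0,0,1,0,1,0,0,0,0]),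
    ([1,0,0,0,0,0,0,0,0,0,0,0,0,0,0,0], [0,0,0,1,0,0,0,0,0,0,0,0,0,0,0,0], [1,1,1,1,1,1,1,1,1,1,1,1,1,1,1,1]),
    ([1,0,0,0,- 1,- 1,0,0,0,0,0,0,0,0,0,0], [0,0,- 1,1,0,0,1,0,0,0,0,0,0,0,0,0], [- 1,0,- 1,0,- 1,- 1,- 1,- 1,- 1,0,- 1,0,- 1,- 1,- 1,- 1]),
    ([0,0,0,0,0,1,0,0,0,0,0,0,0,0,0,0], [0,0,- 1,1,0,0,1,- 1,0,0,0,0,0,0,0,0], [0,0,0,0,0,- 1,0,- 1,0,0,0,0,0,- 1,0,- 1]),
    ([1,1,0,0,- 1,- 1,0,0,0,0,0,0,0,0,0,0], [0,0,0,0,0,0,1,0,0,0,0,0,0,0,0,0], [1,0,1,0,0,0,0,0,1,0,1,0,0,0,0,0]),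
    ([0,0,0,0,- 1,- 1,0,0,0,0,0,0,0,0,0,0], [0,0,1,- 1,0,0,0,0,0,0,0,0,0,0,0,0], [- 1,0,- 1,0,- 1,0,- 1,0,- 1,0,- 1,0,- 1,0,- 1,0]),
    ([- 1,0,0,0,1,0,0,0,1,0,1,0,- 1,0,- 1,0], [- 1,0,1,0,1,0,- 1,0,1,0,0,0,- 1,0,0,0], [0,0,0,0,- 1,- 1,0,0,0,0,0,0,- 1,- 1,- 1,- 1]),
    ([0,1,0,0,0,0,0,0,0,- 1,0,- 1,0,0,0,0], [0,0,0,0,0,- 1,0,1,0,0,0,0,0,1,0,0], [0,- 1,0,0,0,0,0,0,0,- 1,0,- 1,0,0,0,0]),
    ([1,0,0,0,0,0,0,0,- 1,0,- 1,0,0,0,0,0], [0,- 1,0,1,0,0,0,0,0,1,0,0,0,0,0,0], [- 1,- 1,0,0,- 1,- 1,0,0,- 1,- 1,- 1,- 1,- 1,- 1,- 1,- 1]),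
    ([1,0,0,0,- 1,- 1,0,0,- 1,0,- 1,0,1,1,1,1], [1,- 1,- 1,1,- 1,0,1,0,- 1,1,0,0,1,0,0,0], [1,0,0,0,1,1,0,0,1,0,1,0,1,1,1,1]),
    ([0,0,0,0,0,1,0,0,0,0,0,0,0,- 1,0,- 1], [1,- 1,- 1,1,- 1,1,1,- 1,- 1,1,0,0,1,- 1,0,0], [0,0,0,0,0,1,0,0,0,0,0,0,0,1,0,1]),
    ([1,1,0,0,- 1,- 1,0,0,- 1,- 1,- 1,- 1,1,1,1,1], [0,0,0,0,- 1,0,1,0,0,0,0,0,1,0,0,0], [- 1,0,0,0,0,0,0,0,- 1,0,- 1,0,0,0,0,0]),
    ([0,0,0,0,- 1,- 1,0,0,0,0,0,0,1,1,1,1], [- 1,1,1,- 1,0,0,0,0,1,- 1,0,0,0,0,0,0], [1,0,0,0,1,0,0,0,1,0,1,0,1,0,1,0]),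
    ([0,0,0,0,0,0,0,0,0,0,- 1,0,0,0,1,0], [- 1,0,1,0,1,0,- 1,0,1,0,- 1,0,- 1,0,1,0], [0,0,0,0,0,0,0,0,0,0,0,0,0,0,- 1,- 1]),
    ([0,0,0,0,0,0,0,0,0,0,0,1,0,0,0,0], [0,0,0,0,0,- 1,0,1,0,0,0,0,0,1,0,- 1], [0,0,0,0,0,0,0,0,0,0,0,- 1,0,0,0,0]),
    ([0,0,0,0,0,0,0,0,0,0,1,0,0,0,0,0], [0,- 1,0,1,0,0,0,0,0,1,0,- 1,0,0,0,0], [0,0,0,0,0,0,0,0,0,0,- 1,- 1,0,0,- 1,- 1]),
    ([0,0,0,0,0,0,0,0,0,0,1,0,0,0,- 1,- 1], [1,- 1,- 1,1,- 1,0,1,0,- 1,1,1,- 1,1,0,- 1,0], [0,0,0,0,0,0,0,0,0,0,1,0,0,0,1,1]),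
    ([0,0,0,0,0,0,0,0,0,0,0,0,0,0,0,1], [1,- 1,- 1,1,- 1,1,1,- 1,- 1,1,1,- 1,1,- 1,- 1,1], [0,0,0,0,0,0,0,0,0,0,0,0,0,0,0,1]),
    ([0,0,0,0,0,0,0,0,0,0,1,1,0,0,- 1,- 1], [0,0,0,0,- 1,0,1,0,0,0,0,0,1,0,- 1,0], [0,0,0,0,0,0,0,0,0,0,- 1,0,0,0,0,0]),
    ([0,0,0,0,0,0,0,0,0,0,0,0,0,0,- 1,- 1], [- 1,1,1,- 1,0,0,0,0,1,- 1,- 1,1,0,0,0,0], [0,0,0,0,0,0,0,0,0,0,1,0,0,0,1,0]),
    ([- 1,0,- 1,0,1,0,1,0,1,0,1,0,- 1,0,- 1,0], [0,0,0,0,0,0,0,0,1,0,0,0,- 1,0,0,0], [0,0,0,0,1,1,0,0,0,0,0,0,0,0,0,0]),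
    ([0,1,0,1,0,0,0,0,0,- 1,0,- 1,0,0,0,0], [0,0,0,0,0,0,0,0,0,0,0,0,0,1,0,0], [0,1,0,0,0,0,0,0,0,0,0,0,0,0,0,0]),
    ([1,0,1,0,0,0,0,0,- 1,0,- 1,0,0,0,0,0], [0,0,0,0,0,0,0,0,0,1,0,0,0,0,0,0], [1,1,0,0,1,1,0,0,0,0,0,0,0,0,0,0]),
    ([1,0,1,0,- 1,- 1,- 1,- 1,- 1,0,- 1,0,1,1,1,1], [0,0,0,0,0,0,0,0,- 1,1,0,0,1,0,0,0], [- 1,0,0,0,- 1,- 1,0,0,0,0,0,0,0,0,0,0]),
    ([0,0,0,0,0,1,0,1,0,0,0,0,0,- 1,0,- 1], [0,0,0,0,0,0,0,0,- 1,1,0,0,1,- 1,0,0], [0,0,0,0,0,- 1,0,0,0,0,0,0,0,0,0,0]),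
    ([1,1,1,1,- 1,- 1,- 1,- 1,- 1,- 1,- 1,- 1,1,1,1,1], [0,0,0,0,0,0,0,0,0,0,0,0,1,0,0,0], [1,0,0,0,0,0,0,0,0,0,0,0,0,0,0,0]),
    ([0,0,0,0,- 1,- 1,- 1,- 1,0,0,0,0,1,1,1,1], [0,0,0,0,0,0,0,0,1,- 1,0,0,0,0,0,0], [- 1,0,0,0,- 1,0,0,0,0,0,0,0,0,0,0,0]),
    ([0,0,0,0,0,0,0,0,1,0,1,0,- 1,0,- 1,0], [1,0,- 1,0,- 1,0,1,0,0,0,0,0,0,0,0,0], [0,0,0,0,- 1,- 1,0,0,0,0,0,0,- 1,- 1,0,0]),
    ([0,0,0,0,0,0,0,0,0,- 1,0,- 1,0,0,0,0], [0,0,0,0,0,1,0,- 1,0,0,0,0,0,0,0,0], [0,- 1,0,0,0,0,0,0,0,- 1,0,0,0,0,0,0]),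
    ([0,0,0,0,0,0,0,0,- 1,0,- 1,0,0,0,0,0], [0,1,0,- 1,0,0,0,0,0,0,0,0,0,0,0,0], [- 1,- 1,0,0,- 1,- 1,0,0,- 1,- 1,0,0,- 1,- 1,0,0]),
    ([0,0,0,0,0,0,0,0,- 1,0,- 1,0,1,1,1,1], [- 1,1,1,- 1,1,0,- 1,0,0,0,0,0,0,0,0,0], [1,0,0,0,1,1,0,0,1,0,0,0,1,1,0,0]),
    ([0,0,0,0,0,0,0,0,0,0,0,0,0,- 1,0,- 1], [- 1,1,1,- 1,1,- 1,- 1,1,0,0,0,0,0,0,0,0], [0,0,0,0,0,1,0,0,0,0,0,0,0,1,0,0]),
    ([0,0,0,0,0,0,0,0,- 1,- 1,- 1,- 1,1,1,1,1], [0,0,0,0,1,0,- 1,0,0,0,0,0,0,0,0,0], [- 1,0,0,0,0,0,0,0,- 1,0,0,0,0,0,0,0]),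
    ([0,0,0,0,0,0,0,0,0,0,0,0,1,1,1,1], [1,- 1,- 1,1,0,0,0,0,0,0,0,0,0,0,0,0], [1,0,0,0,1,0,0,0,1,0,0,0,1,0,0,0])
  ]"

lemma mm_algorithm_222: "mm_algorithm 2 2 2 7 (decode 2 2 alg_222 :: 'k::field mm_coeffs)"
  by (rule mm_algorithm_decode; code_simp)

lemma mm_algorithm_334: "mm_algorithm 3 3 4 29 (decode 3 4 alg_334 :: 'k::field mm_coeffs)"
  by (rule mm_algorithm_decode; code_simp)

lemma mm_algorithm_344: "mm_algorithm 3 4 4 38 (decode 4 4 alg_344 :: 'k::field mm_coeffs)"
  by (rule mm_algorithm_decode; code_simp)

lemma mm_algorithm_444: "mm_algorithm 4 4 4 49 (decode 4 4 alg_444 :: 'k::field mm_coeffs)"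
  by (rule mm_algorithm_decode; code_simp)

section \<open>Seven by seven matrices\<close>

definition inner_rows :: "nat \<Rightarrow> nat" where "inner_rows k = [3, 4, 4, 4, 3, 4, 3] ! k"
definition inner_mid :: "nat \<Rightarrow> nat" where "inner_mid k = [4, 3, 4, 3, 4, 4, 3] ! k"
definition inner_cols :: "nat \<Rightarrow> nat" where "inner_cols k = [3, 4, 3, 3, 4, 4, 4] ! k"
definition inner_rank :: "nat \<Rightarrow> nat" where "inner_rank k = [29, 38, 38, 29, 38, 49, 29] ! k"

definition inner_alg :: "nat \<Rightarrow> 'k::field mm_coeffs" where
  "inner_alg k =
     (let T334 = decode 3 4 alg_334; T344 = decode 4 4 alg_344; T444 = decode 4 4 alg_444
      in [rotate_coeffs T334, rotate_coeffs (rotate_coeffs T344), rotate_coeffs T344,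
          rotate_coeffs (rotate_coeffs T334), T344, T444, T334] ! k)"

lemma mm_algorithm_inner_alg:
  "\<forall>k<7. mm_algorithm (inner_rows k) (inner_mid k) (inner_cols k) (inner_rank k) (inner_alg k :: 'k::field mm_coeffs)"
  using mm_algorithm_334 mm_algorithm_344 mm_algorithm_444
    mm_algorithm_rotate[OF mm_algorithm_334] mm_algorithm_rotate[OF mm_algorithm_rotate[OF mm_algorithm_334]]
    mm_algorithm_rotate[OF mm_algorithm_344] mm_algorithm_rotate[OF mm_algorithm_rotate[OF mm_algorithm_344]]
  by (simp add: less_Suc_eq numeral_eq_Suc all_conj_distrib inner_rows_def inner_mid_def inner_cols_def
      inner_rank_def inner_alg_def Let_def)

lemma block_split_3_4: "block_split 7 2 (\<lambda>I. if I = 0 then 3 else 4) (split_two_blocks 3)"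
  using block_split_two_blocks[of 3 4] by simp

lemma block_split_4_3: "block_split 7 2 (\<lambda>I. if I = 0 then 4 else 3) (split_two_blocks 4)"
  using block_split_two_blocks[of 4 3] by simp

lemma alg_222_fit_rows:
  "\<forall>k<7. \<forall>I<2. \<forall>I'<2. \<forall>J<2. \<forall>L<2. decode_A 2 alg_222 k I' J \<noteq> (0::'k::field) \<longrightarrow>
     decode_C 2 alg_222 k I L \<noteq> (0::'k) \<longrightarrow>
     min (if I = 0 then 3 else 4) (if I' = 0 then 3 else 4) \<le> inner_rows k"
  by (simp add: less_Suc_eq numeral_eq_Suc all_conj_distrib decode_A_def decode_C_def alg_222_def inner_rows_def)

lemma alg_222_fit_mid:
  "\<forall>k<7. \<forall>J<2. \<forall>J'<2. \<forall>I<2. \<forall>L<2. decode_A 2 alg_222 k I J \<noteq> (0::'k::field) \<longrightarrow>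
     decode_B 2 alg_222 k J' L \<noteq> (0::'k) \<longrightarrow>
     min (if J = 0 then 3 else 4) (if J' = 0 then 3 else 4) \<le> inner_mid k"
  by (simp add: less_Suc_eq numeral_eq_Suc all_conj_distrib decode_A_def decode_B_def alg_222_def inner_mid_def)

lemma alg_222_fit_cols:
  "\<forall>k<7. \<forall>L<2. \<forall>L'<2. \<forall>I<2. \<forall>J<2. decode_B 2 alg_222 k J L' \<noteq> (0::'k::field) \<longrightarrow>
     decode_C 2 alg_222 k I L \<noteq> (0::'k) \<longrightarrow>
     min (if L = 0 then 4 else 3) (if L' = 0 then 4 else 3) \<le> inner_cols k"
  by (simp add: less_Suc_eq numeral_eq_Suc all_conj_distrib decode_B_def decode_C_def alg_222_def inner_cols_def)

theorem mainTheorem2: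
  shows "mm_rank TYPE('k::field) 7 7 7 \<le> 250"
  using mm_rank_le[OF mm_algorithm_compose_blocks[OF mm_algorithm_222 mm_algorithm_inner_alg
      block_split_3_4 block_split_3_4 block_split_4_3 alg_222_fit_rows alg_222_fit_mid alg_222_fit_cols]]
  by (simp add: inner_rank_def numeral_eq_Suc)

end
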